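(* Let $m\ge 0$ and call a square of type B$'$ any $4\times 4$ array with entries in $\{0,1,\dots,2^m-1\}$ whose first row and first column consist of zeros and in which every row and every column has bitwise XOR equal to $0$ (repetitions allowed). Then, up to applying an invertible affine transformation of $\mathbb{Z}_2^m$ to all entries (entries identified with vectors of $\mathbb{Z}_2^m$ via binary expansion), permuting the last three rows, permuting the last three columns, and reflecting along the main diagonal, every square of type B$'$ is one of the following ten arrays (rows listed top to bottom, separated by semicolons; only those whose entries are less than $2^m$ occur): (1) $0,0,0,0;\ 0,0,0,0;\ 0,0,0,0;\ 0,0,0,0$; (2) $0,0,0,0;\ 0,0,0,0;\ 0,0,1,1;\ 0,0,1,1$; (3) $0,0,0,0;\ 0,0,0,0;\ 0,1,2,3;\ 0,1,2,3$; (4) $0,0,0,0;\ 0,0,1,1;\ 0,1,0,1;\ 0,1,1,0$; (5) $0,0,0,0;\ 0,0,1,1;\ 0,1,2,3;\ 0,1,3,2$; (6) $0,0,0,0;\ 0,0,1,1;\ 0,2,0,2;\ 0,2,1,3$; (7) $0,0,0,0;\ 0,0,1,1;\ 0,2,4,6;\ 0,2,5,7$; (8) $0,0,0,0;\ 0,1,2,3;\ 0,2,3,1;\ 0,3,1,2$; (9) $0,0,0,0;\ 0,1,2,3;\ 0,2,4,6;\ 0,3,6,5$; (10) $0,0,0,0;\ 0,1,2,3;\ 0,4,8,12;\ 0,5,10,15$.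
   Context: Bitwise XOR of nonnegative integers is addition in $\mathbb{Z}_2^m$ of their binary expansions. Squares of type B$'$ are the squares of type B (in the EvenQuads-$2^{m+4}$ deck: arrays of multiples of $16$ with zero first row and column and all rows/columns XOR-ing to $0$) divided by $16$. *)

theory Defs
  imports Main "HOL-Combinatorics.Permutations"
begin

unbundle bit_operations_syntax

text \<open>A 4x4 array is a function nat => nat => nat, indices 0..3.
  Entries are naturals < 2^m, identified with vectors of Z_2^m via binary
  expansion; addition in Z_2^m is bitwise xor.\<close>

definition typeBprime :: "nat \<Rightarrow> (nat \<Rightarrow> nat \<Rightarrow> nat) \<Rightarrow> bool" where
  "typeBprime m S \<longleftrightarrow>
     (\<forall>i<4. \<forall>j<4. S i j < 2 ^ m) \<and>
     (\<forall>j<4. S 0 j = 0) \<and> (\<forall>i<4. S i 0 = 0) \<and>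
     (\<forall>i<4. S i 0 XOR S i 1 XOR S i 2 XOR S i 3 = 0) \<and>
     (\<forall>j<4. S 0 j XOR S 1 j XOR S 2 j XOR S 3 j = 0)"

text \<open>GF(2)-linear maps of Z_2^m (additivity suffices over GF(2)).\<close>
definition linear_Z2 :: "nat \<Rightarrow> (nat \<Rightarrow> nat) \<Rightarrow> bool" where
  "linear_Z2 m L \<longleftrightarrow>
     (\<forall>x<2^m. L x < 2^m) \<and> (\<forall>x<2^m. \<forall>y<2^m. L (x XOR y) = L x XOR L y)"

definition inv_affine_Z2 :: "nat \<Rightarrow> (nat \<Rightarrow> nat) \<Rightarrow> bool" where
  "inv_affine_Z2 m f \<longleftrightarrow>
     bij_betw f {..<2^m} {..<2^m} \<and>
     (\<exists>L c. linear_Z2 m L \<and> c < 2^m \<and> (\<forall>x<2^m. f x = L x XOR c))"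

definition squaresB :: "nat list list list" where
  "squaresB = [
    [[0,0,0,0],[0,0,0,0],[0,0,0,0],[0,0,0,0]],
    [[0,0,0,0],[0,0,0,0],[0,0,1,1],[0,0,1,1]],
    [[0,0,0,0],[0,0,0,0],[0,1,2,3],[0,1,2,3]],
    [[0,0,0,0],[0,0,1,1],[0,1,0,1],[0,1,1,0]],
    [[0,0,0,0],[0,0,1,1],[0,1,2,3],[0,1,3,2]],
    [[0,0,0,0],[0,0,1,1],[0,2,0,2],[0,2,1,3]],
    [[0,0,0,0],[0,0,1,1],[0,2,4,6],[0,2,5,7]],
    [[0,0,0,0],[0,1,2,3],[0,2,3,1],[0,3,1,2]],
    [[0,0,0,0],[0,1,2,3],[0,2,4,6],[0,3,6,5]],
    [[0,0,0,0],[0,1,2,3],[0,4,8,12],[0,5,10,15]]]"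

end

theory Submission
  imports Defs
begin

text \<open>A square of type B' is determined by its block \<open>S\<^sub>1\<^sub>1, S\<^sub>1\<^sub>2, S\<^sub>2\<^sub>1, S\<^sub>2\<^sub>2\<close>, since its
  third row and column are the sums of the first two, and an invertible linear map of \<open>Z\<^sub>2\<^sup>m\<close>
  applied to all entries acts on the block. Transvections bring any list of vectors to echelon
  form, where each entry is either the next unit vector or a combination of earlier ones. The 67
  echelon lists of length four have pairwise different linear relations, so blocks with the same
  relations differ by an invertible linear map. It remains to check, by a finite table, that each
  echelon block can be reindexed (permuting rows and columns 1..3, possibly transposing) to a
  square whose block has the relations of the block of one of the ten listed squares.\<close>

section \<open>Invertible linear maps of Z_2^m\<close>

lemma xor_less_power: "(x::nat) < 2^n \<Longrightarrow> y < 2^n \<Longrightarrow> x XOR y < 2^n"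
  by (simp flip: take_bit_nat_eq_self_iff)

lemma not_bit_if_less_power: "(x::nat) < 2^n \<Longrightarrow> n \<le> p \<Longrightarrow> \<not> bit x p"
  by (metis bit_take_bit_iff not_less take_bit_nat_eq_self_iff)

lemma bit_if_not_less_power: "\<not> (x::nat) < 2^n \<Longrightarrow> \<exists>p\<ge>n. bit x p"
  by (metis bit_take_bit_iff bit_eqI not_less take_bit_nat_eq_self_iff)

definition inv_linear_Z2 :: "nat \<Rightarrow> (nat \<Rightarrow> nat) \<Rightarrow> bool" where
  "inv_linear_Z2 m g \<longleftrightarrow> bij_betw g {..<2^m} {..<2^m} \<and> linear_Z2 m g"

lemma inv_linear_Z2_id: "inv_linear_Z2 m id"
  by (simp add: inv_linear_Z2_def linear_Z2_def)

lemma inv_linear_Z2_comp: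
  "inv_linear_Z2 m f \<Longrightarrow> inv_linear_Z2 m g \<Longrightarrow> inv_linear_Z2 m (g \<circ> f)"
  unfolding inv_linear_Z2_def linear_Z2_def
  by (auto intro: bij_betw_trans simp: xor_less_power)

lemma inv_linear_Z2_less: "inv_linear_Z2 m f \<Longrightarrow> x < 2^m \<Longrightarrow> f x < 2^m"
  by (simp add: inv_linear_Z2_def linear_Z2_def)

lemma inv_linear_Z2_xor:
  "inv_linear_Z2 m f \<Longrightarrow> x < 2^m \<Longrightarrow> y < 2^m \<Longrightarrow> f (x XOR y) = f x XOR f y"
  by (simp add: inv_linear_Z2_def linear_Z2_def)

lemma inv_linear_Z2_zero: "inv_linear_Z2 m f \<Longrightarrow> f 0 = 0"
  using inv_linear_Z2_xor[of m f 0 0] by simp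

lemma inv_linear_Z2_eq_zero_iff:
  "inv_linear_Z2 m f \<Longrightarrow> x < 2^m \<Longrightarrow> f x = 0 \<longleftrightarrow> x = 0"
  using inv_linear_Z2_zero[of m f] unfolding inv_linear_Z2_def bij_betw_def inj_on_def
  by (metis lessThan_iff zero_less_numeral zero_less_power)

lemma inv_affine_Z2_if_inv_linear_Z2: "inv_linear_Z2 m f \<Longrightarrow> inv_affine_Z2 m f"
  unfolding inv_linear_Z2_def inv_affine_Z2_def by (intro conjI exI[of _ f] exI[of _ 0]) auto

text \<open>The transvection \<open>x \<mapsto> x + \<phi>(x) u\<close> is its own inverse because \<open>\<phi>(u) = 0\<close>.\<close>

lemma inv_linear_Z2_transvection:
  assumes \<phi>: "\<And>x y. \<phi> (x XOR y) \<longleftrightarrow> \<phi> x \<noteq> \<phi> y" and u: "\<not> \<phi> u" "u < 2^m"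
  shows "inv_linear_Z2 m (\<lambda>x. if \<phi> x then x XOR u else x)"
proof -
  define T where "T = (\<lambda>x. if \<phi> x then x XOR u else x)"
  have T_less: "T x < 2^m" if "x < 2^m" for x
    using that u by (simp add: T_def xor_less_power)
  have "T (T x) = x" for x
    using \<phi>[of x u] u by (auto simp: T_def xor.assoc)
  then have "bij_betw T {..<2^m} {..<2^m}"
    by (intro bij_betw_byWitness[where f'=T]) (auto simp: T_less)
  moreover have "T (x XOR y) = T x XOR T y" for x y
    using \<phi>[of x y] by (auto simp: T_def intro!: bit_eqI simp: bit_xor_iff)
  ultimately show ?thesis
    using T_less unfolding inv_linear_Z2_def linear_Z2_def T_def by auto
qed

lemma exists_inv_linear_Z2_move_bit:
  assumes v: "v < 2^m" "bit v p" and rp: "r \<le> p"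
  shows "\<exists>h. inv_linear_Z2 m h \<and> (\<forall>x<2^r. h x = x) \<and> bit (h v) r"
proof (cases "bit v r")
  case True
  then show ?thesis using inv_linear_Z2_id by (intro exI[of _ id]) auto
next
  case False
  then have "p \<noteq> r" using v(2) by auto
  have "p < m" using not_bit_if_less_power[OF v(1)] v(2) by (meson not_le)
  then have "(2::nat)^r < 2^m" using rp by simp
  then have "inv_linear_Z2 m (\<lambda>x. if bit x p then x XOR 2^r else x)"
    using \<open>p \<noteq> r\<close> by (intro inv_linear_Z2_transvection) (auto simp: bit_xor_iff bit_exp_iff)
  moreover have "\<not> bit x p" if "x < 2^r" for x :: nat
    using not_bit_if_less_power[OF that rp] .
  ultimately show ?thesis
    using v False by (intro exI[of _ "\<lambda>x. if bit x p then x XOR 2^r else x"])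
      (auto simp: bit_xor_iff bit_exp_iff)
qed

lemma exists_inv_linear_Z2_to_power:
  assumes v: "v < 2^m" "bit v r"
  shows "\<exists>h. inv_linear_Z2 m h \<and> (\<forall>x<2^r. h x = x) \<and> h v = 2^r"
proof -
  have "r < m" using not_bit_if_less_power[OF v(1)] v(2) by (meson not_le)
  then have "v XOR 2^r < 2^m" using v(1) by (simp add: xor_less_power)
  then have "inv_linear_Z2 m (\<lambda>x. if bit x r then x XOR (v XOR 2^r) else x)"
    using v by (intro inv_linear_Z2_transvection) (auto simp: bit_xor_iff bit_exp_iff)
  moreover have "\<not> bit x r" if "x < 2^r" for x :: nat
    using not_bit_if_less_power[OF that] by simp
  ultimately show ?thesis
    using v by (intro exI[of _ "\<lambda>x. if bit x r then x XOR (v XOR 2^r) else x"])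
      (auto simp flip: xor.assoc)
qed

section \<open>Echelon form\<close>

text \<open>\<open>echelon r xs\<close>: reading \<open>xs\<close> from left to right, with the pivots \<open>2^0, \<dots>, 2^(r-1)\<close>
  already used, every entry is either a combination of the pivots used so far or the
  next pivot.\<close>

fun echelon :: "nat \<Rightarrow> nat list \<Rightarrow> bool" where
  "echelon r [] = True"
| "echelon r (c # cs) \<longleftrightarrow> c < 2^r \<and> echelon r cs \<or> c = 2^r \<and> echelon (Suc r) cs"

lemma exists_inv_linear_Z2_echelon_step:
  assumes f: "inv_linear_Z2 m f" and a: "a < 2^m"
  shows "\<exists>g. inv_linear_Z2 m g \<and> (\<forall>y<2^m. f y < 2^r \<longrightarrow> g y = f y) \<and>
           (g a < 2^r \<or> g a = 2^r)"
proof (cases "f a < 2^r")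
  case True
  then show ?thesis using f by blast
next
  case False
  have fa: "f a < 2^m" using inv_linear_Z2_less[OF f a] .
  obtain p where p: "r \<le> p" "bit (f a) p" using bit_if_not_less_power[OF False] by blast
  obtain h1 where h1: "inv_linear_Z2 m h1" "\<forall>x<2^r. h1 x = x" "bit (h1 (f a)) r"
    using exists_inv_linear_Z2_move_bit[OF fa p(2) p(1)] by blast
  obtain h2 where h2: "inv_linear_Z2 m h2" "\<forall>x<2^r. h2 x = x" "h2 (h1 (f a)) = 2^r"
    using exists_inv_linear_Z2_to_power[OF inv_linear_Z2_less[OF h1(1) fa] h1(3)] by blast
  show ?thesis
    using inv_linear_Z2_comp[OF inv_linear_Z2_comp[OF f h1(1)] h2(1)] h1 h2
    by (intro exI[of _ "h2 \<circ> (h1 \<circ> f)"]) auto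
qed

lemma exists_inv_linear_Z2_echelon_extending:
  "set xs \<subseteq> {..<2^m} \<Longrightarrow> inv_linear_Z2 m f \<Longrightarrow>
   \<exists>g. inv_linear_Z2 m g \<and> (\<forall>y<2^m. f y < 2^r \<longrightarrow> g y = f y) \<and> echelon r (map g xs)"
proof (induction xs arbitrary: f r)
  case Nil
  then show ?case by auto
next
  case (Cons a xs)
  obtain g1 where g1: "inv_linear_Z2 m g1" "\<forall>y<2^m. f y < 2^r \<longrightarrow> g1 y = f y"
    "g1 a < 2^r \<or> g1 a = 2^r"
    using exists_inv_linear_Z2_echelon_step[of m f a r] Cons.prems by auto
  define r' where "r' = (if g1 a < 2^r then r else Suc r)"
  obtain g2 where g2: "inv_linear_Z2 m g2" "\<forall>y<2^m. g1 y < 2^r' \<longrightarrow> g2 y = g1 y"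
    "echelon r' (map g2 xs)"
    using Cons.IH[of g1 r'] Cons.prems g1(1) by auto
  have "(2::nat)^r \<le> 2^r'" by (simp add: r'_def)
  then have "\<forall>y<2^m. f y < 2^r \<longrightarrow> g2 y = f y"
    using g1(2) g2(2) by (metis order.strict_trans2)
  moreover have "g2 a = g1 a"
    using g1(3) g2(2) Cons.prems(1) by (auto simp: r'_def)
  ultimately show ?case
    using g1(3) g2 by (intro exI[of _ g2]) (auto simp: r'_def)
qed

corollary exists_inv_linear_Z2_echelon:
  "set xs \<subseteq> {..<2^m} \<Longrightarrow> \<exists>g. inv_linear_Z2 m g \<and> echelon 0 (map g xs)"
  using exists_inv_linear_Z2_echelon_extending[OF _ inv_linear_Z2_id] by blast

fun echelon_lists :: "nat \<Rightarrow> nat \<Rightarrow> nat list list" where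
  "echelon_lists r 0 = [[]]"
| "echelon_lists r (Suc n) =
     concat (map (\<lambda>c. map ((#) c) (echelon_lists r n)) [0..<2^r])
     @ map ((#) (2^r)) (echelon_lists (Suc r) n)"

lemma set_echelon_lists: "set (echelon_lists r n) = {xs. length xs = n \<and> echelon r xs}"
proof (induction n arbitrary: r)
  case 0
  then show ?case by auto
next
  case (Suc n)
  show ?case
  proof (intro set_eqI iffI)
    fix xs assume "xs \<in> set (echelon_lists r (Suc n))"
    then show "xs \<in> {xs. length xs = Suc n \<and> echelon r xs}"
      using Suc.IH by auto
  next
    fix xs assume "xs \<in> {xs. length xs = Suc n \<and> echelon r xs}"
    then show "xs \<in> set (echelon_lists r (Suc n))"
      using Suc.IH by (cases xs) auto
  qed
qed

section \<open>Linear relations of a list of vectors\<close>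

fun lin_comb :: "bool list \<Rightarrow> nat list \<Rightarrow> nat" where
  "lin_comb (b # bs) (x # xs) = (if b then x XOR lin_comb bs xs else lin_comb bs xs)"
| "lin_comb _ _ = 0"

definition relations :: "nat list \<Rightarrow> bool list list" where
  "relations xs =
     filter (\<lambda>bs. lin_comb bs xs = 0) (product_lists (replicate (length xs) [False, True]))"

lemma lin_comb_less: "set xs \<subseteq> {..<2^m} \<Longrightarrow> lin_comb bs xs < 2^m"
  by (induction bs xs rule: lin_comb.induct) (auto simp: xor_less_power)

lemma inv_linear_Z2_lin_comb:
  "inv_linear_Z2 m g \<Longrightarrow> set xs \<subseteq> {..<2^m} \<Longrightarrow> g (lin_comb bs xs) = lin_comb bs (map g xs)"
  by (induction bs xs rule: lin_comb.induct)
    (auto simp: inv_linear_Z2_xor inv_linear_Z2_zero lin_comb_less)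

lemma relations_map_inv_linear_Z2:
  assumes "inv_linear_Z2 m g" "set xs \<subseteq> {..<2^m}"
  shows "relations (map g xs) = relations xs"
  using assms inv_linear_Z2_eq_zero_iff[OF assms(1) lin_comb_less[OF assms(2)]]
  by (simp add: relations_def inv_linear_Z2_lin_comb[symmetric])

definition block :: "(nat \<Rightarrow> nat \<Rightarrow> nat) \<Rightarrow> nat list" where
  "block S = [S 1 1, S 1 2, S 2 1, S 2 2]"

text \<open>Rows \<open>1, 2, 3\<close> of a square of type B' are \<open>e\<^sub>1, e\<^sub>2, e\<^sub>1 + e\<^sub>2\<close> and likewise for columns:
  \<open>e\<^sub>1\<close> contributes to the odd rows, \<open>e\<^sub>2\<close> to rows \<open>2\<close> and \<open>3\<close>.\<close>

definition square_of_block :: "nat list \<Rightarrow> nat \<Rightarrow> nat \<Rightarrow> nat" where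
  "square_of_block d i j =
     lin_comb [odd i \<and> odd j, odd i \<and> 2 \<le> j, 2 \<le> i \<and> odd j, 2 \<le> i \<and> 2 \<le> j] d"

definition reindex ::
  "(nat \<Rightarrow> nat) \<Rightarrow> (nat \<Rightarrow> nat) \<Rightarrow> bool \<Rightarrow> (nat \<Rightarrow> nat \<Rightarrow> nat) \<Rightarrow> nat \<Rightarrow> nat \<Rightarrow> nat" where
  "reindex \<sigma> \<tau> t S i j = (if t then S (\<sigma> j) (\<tau> i) else S (\<sigma> i) (\<tau> j))"

lemma block_less_if_typeBprime: "typeBprime m S \<Longrightarrow> set (block S) \<subseteq> {..<2^m}"
  by (auto simp: typeBprime_def block_def)

lemma xor3_eq_0_iff: "(a::nat) XOR b XOR c = 0 \<longleftrightarrow> c = a XOR b"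
  by (metis xor.assoc xor_self_eq xor.right_neutral)

lemma typeBprime_row:
  "typeBprime m S \<Longrightarrow> i < 4 \<Longrightarrow> S i 1 XOR S i 2 XOR S i 3 = 0"
  unfolding typeBprime_def by (metis xor.left_neutral)

lemma typeBprime_col:
  "typeBprime m S \<Longrightarrow> j < 4 \<Longrightarrow> S 1 j XOR S 2 j XOR S 3 j = 0"
  unfolding typeBprime_def by (metis xor.left_neutral)

lemma typeBprime_eq_square_of_block:
  assumes S: "typeBprime m S" and ij: "i < 4" "j < 4"
  shows "S i j = square_of_block (block S) i j"
proof -
  have row: "S i 3 = S i 1 XOR S i 2" if "i < 4" for i
    using typeBprime_row[OF S that] by (simp add: xor3_eq_0_iff)
  have col: "S 3 j = S 1 j XOR S 2 j" if "j < 4" for j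
    using typeBprime_col[OF S that] by (simp add: xor3_eq_0_iff)
  have zero: "S i 0 = 0" "S 0 j = 0" if "i < 4" "j < 4" for i j
    using S that by (auto simp: typeBprime_def)
  have "S 3 3 = S 1 1 XOR S 1 2 XOR S 2 1 XOR S 2 2"
    using row[of 3] col[of 1] col[of 2] by (simp add: ac_simps)
  moreover have "i \<in> {0,1,2,3}" "j \<in> {0,1,2,3}"
    using ij by auto
  ultimately show ?thesis
    using row[of 1] row[of 2] col[of 1] col[of 2] zero[of 0 0] zero[of i j] ij
    by (auto simp: square_of_block_def block_def)
qed

lemma inv_linear_Z2_square_of_block:
  "inv_linear_Z2 m g \<Longrightarrow> set d \<subseteq> {..<2^m} \<Longrightarrow>
   g (square_of_block d i j) = square_of_block (map g d) i j"
  by (simp add: square_of_block_def inv_linear_Z2_lin_comb)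

lemma permutes_123_cases:
  fixes \<tau> :: "nat \<Rightarrow> nat"
  assumes "\<tau> permutes {1,2,3}"
  shows "(\<tau> 1, \<tau> 2, \<tau> 3) \<in> {(1,2,3), (1,3,2), (2,1,3), (2,3,1), (3,1,2), (3,2,1)}"
proof -
  have "\<tau> 1 \<in> {1,2,3}" "\<tau> 2 \<in> {1,2,3}" "\<tau> 3 \<in> {1,2,3}"
    using permutes_in_image[OF assms] by simp_all
  moreover have "\<tau> 1 \<noteq> \<tau> 2" "\<tau> 1 \<noteq> \<tau> 3" "\<tau> 2 \<noteq> \<tau> 3"
    using inj_eq[OF permutes_inj[OF assms]] by simp_all
  ultimately show ?thesis
    unfolding insert_iff empty_iff by (elim disjE) simp_all
qed

lemma xor_permutes_123:
  fixes \<tau> :: "nat \<Rightarrow> nat" and a :: "nat \<Rightarrow> nat"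
  assumes "\<tau> permutes {1,2,3}"
  shows "a (\<tau> 1) XOR a (\<tau> 2) XOR a (\<tau> 3) = a 1 XOR a 2 XOR a 3"
  using permutes_123_cases[OF assms] unfolding insert_iff empty_iff prod.inject
  by (elim disjE conjE) (simp_all add: ac_simps)

lemma permutes_123_less_4:
  fixes \<tau> :: "nat \<Rightarrow> nat"
  assumes "\<tau> permutes {1,2,3}" "i < 4"
  shows "\<tau> i < 4"
proof (cases "i \<in> {1,2,3}")
  case True
  then have "\<tau> i \<in> {1,2,3}" using permutes_in_image[OF assms(1)] by blast
  then show ?thesis by auto
next
  case False
  then show ?thesis using permutes_not_in[OF assms(1)] assms(2) by simp
qed

lemma typeBprime_reindex:
  assumes S: "typeBprime m S" and \<sigma>: "\<sigma> permutes {1,2,3}" and \<tau>: "\<tau> permutes {1,2,3}"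
  shows "typeBprime m (reindex \<sigma> \<tau> t S)"
proof -
  have zero: "S i 0 = 0" "S 0 i = 0" if "i < 4" for i
    using S that by (auto simp: typeBprime_def)
  have row: "S i (\<pi> 0) XOR S i (\<pi> 1) XOR S i (\<pi> 2) XOR S i (\<pi> 3) = 0"
    if "\<pi> permutes {1,2,3}" "i < 4" for \<pi> i
    using typeBprime_row[OF S that(2)] zero[OF that(2)] permutes_not_in[OF that(1), of 0]
      xor_permutes_123[OF that(1), of "S i"] by simp
  have col: "S (\<pi> 0) j XOR S (\<pi> 1) j XOR S (\<pi> 2) j XOR S (\<pi> 3) j = 0"
    if "\<pi> permutes {1,2,3}" "j < 4" for \<pi> j
    using typeBprime_col[OF S that(2)] zero[OF that(2)] permutes_not_in[OF that(1), of 0]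
      xor_permutes_123[OF that(1), of "\<lambda>i. S i j"] by simp
  have "\<sigma> 0 = 0" "\<tau> 0 = 0"
    using permutes_not_in[OF \<sigma>] permutes_not_in[OF \<tau>] by auto
  then show ?thesis
    using S zero row[OF \<sigma>] row[OF \<tau>] col[OF \<sigma>] col[OF \<tau>]
      permutes_123_less_4[OF \<sigma>] permutes_123_less_4[OF \<tau>]
    unfolding typeBprime_def reindex_def by auto
qed

section \<open>The ten normal forms\<close>

definition squareB :: "nat \<Rightarrow> nat \<Rightarrow> nat \<Rightarrow> nat" where
  "squareB k i j = squaresB ! k ! i ! j"

definition perm_of_list :: "nat list \<Rightarrow> nat \<Rightarrow> nat" where
  "perm_of_list p i = (if i = 1 then p!0 else if i = 2 then p!1 else if i = 3 then p!2 else i)"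

definition perms_123 :: "nat list list" where
  "perms_123 = [[1,2,3],[1,3,2],[2,1,3],[2,3,1],[3,1,2],[3,2,1]]"

lemma perm_of_list_permutes: "p \<in> set perms_123 \<Longrightarrow> perm_of_list p permutes {1,2,3}"
  by (rule bij_imp_permutes) (auto simp: perms_123_def perm_of_list_def bij_betw_def inj_on_def)

text \<open>An entry \<open>(c, p, q, t, k)\<close> says that reindexing \<open>square_of_block c\<close> by \<open>perm_of_list p\<close>,
  \<open>perm_of_list q\<close> and \<open>t\<close> gives a block with the same linear relations as that of \<open>squareB k\<close>.\<close>

definition reindex_witnesses :: "(nat list \<times> nat list \<times> nat list \<times> bool \<times> nat) list" where
  "reindex_witnesses = [
   ([0,0,0,0],[1,2,3],[1,2,3],False,0),
   ([0,0,0,1],[1,2,3],[1,2,3],False,1),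
   ([0,0,1,0],[1,2,3],[2,1,3],False,1),
   ([0,0,1,1],[1,2,3],[3,1,2],False,1),
   ([0,0,1,2],[1,2,3],[1,2,3],False,2),
   ([0,1,0,0],[2,1,3],[1,2,3],False,1),
   ([0,1,0,1],[3,1,2],[1,2,3],False,1),
   ([0,1,0,2],[1,2,3],[1,2,3],True,2),
   ([0,1,1,0],[1,2,3],[1,2,3],False,3),
   ([0,1,1,1],[1,2,3],[1,3,2],False,3),
   ([0,1,1,2],[1,2,3],[1,2,3],False,4),
   ([0,1,2,0],[1,2,3],[1,2,3],False,5),
   ([0,1,2,1],[1,3,2],[1,2,3],False,5),
   ([0,1,2,2],[1,2,3],[1,3,2],False,5),
   ([0,1,2,3],[1,3,2],[1,3,2],False,5),
   ([0,1,2,4],[1,2,3],[1,2,3],False,6),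
   ([1,0,0,0],[2,1,3],[2,1,3],False,1),
   ([1,0,0,1],[1,2,3],[2,1,3],False,3),
   ([1,0,0,2],[1,2,3],[2,1,3],False,5),
   ([1,0,1,0],[3,1,2],[2,1,3],False,1),
   ([1,0,1,1],[1,2,3],[2,3,1],False,3),
   ([1,0,1,2],[1,3,2],[2,1,3],False,5),
   ([1,0,2,0],[1,2,3],[2,1,3],True,2),
   ([1,0,2,1],[1,2,3],[2,1,3],False,4),
   ([1,0,2,2],[1,2,3],[2,3,1],False,5),
   ([1,0,2,3],[1,3,2],[2,3,1],False,5),
   ([1,0,2,4],[1,2,3],[2,1,3],False,6),
   ([1,1,0,0],[2,1,3],[3,1,2],False,1),
   ([1,1,0,1],[1,2,3],[3,1,2],False,3),
   ([1,1,0,2],[1,2,3],[3,1,2],False,5),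
   ([1,1,1,0],[1,2,3],[3,2,1],False,3),
   ([1,1,1,1],[3,1,2],[3,1,2],False,1),
   ([1,1,1,2],[1,3,2],[3,1,2],False,5),
   ([1,1,2,0],[1,2,3],[3,2,1],False,5),
   ([1,1,2,1],[1,3,2],[3,2,1],False,5),
   ([1,1,2,2],[1,2,3],[3,1,2],True,2),
   ([1,1,2,3],[1,2,3],[3,1,2],False,4),
   ([1,1,2,4],[1,2,3],[3,1,2],False,6),
   ([1,2,0,0],[2,1,3],[1,2,3],False,2),
   ([1,2,0,1],[2,1,3],[1,2,3],False,4),
   ([1,2,0,2],[2,3,1],[1,2,3],False,5),
   ([1,2,0,3],[2,3,1],[1,3,2],False,5),
   ([1,2,0,4],[2,1,3],[1,2,3],False,6),
   ([1,2,1,0],[2,3,1],[2,1,3],False,5),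
   ([1,2,1,1],[2,3,1],[3,1,2],False,5),
   ([1,2,1,2],[3,1,2],[1,2,3],False,2),
   ([1,2,1,3],[3,1,2],[1,2,3],False,4),
   ([1,2,1,4],[3,1,2],[1,2,3],False,6),
   ([1,2,2,0],[2,1,3],[2,1,3],False,4),
   ([1,2,2,1],[3,1,2],[3,1,2],False,4),
   ([1,2,2,2],[2,3,1],[3,2,1],False,5),
   ([1,2,2,3],[1,2,3],[1,2,3],False,7),
   ([1,2,2,4],[1,2,3],[1,2,3],False,8),
   ([1,2,3,0],[2,3,1],[2,3,1],False,5),
   ([1,2,3,1],[1,2,3],[1,3,2],False,7),
   ([1,2,3,2],[3,1,2],[2,1,3],False,4),
   ([1,2,3,3],[2,1,3],[3,1,2],False,4),
   ([1,2,3,4],[1,2,3],[1,3,2],False,8),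
   ([1,2,4,0],[2,1,3],[2,1,3],False,6),
   ([1,2,4,1],[1,2,3],[2,1,3],False,8),
   ([1,2,4,2],[3,1,2],[2,1,3],False,6),
   ([1,2,4,3],[1,2,3],[2,3,1],False,8),
   ([1,2,4,4],[2,1,3],[3,1,2],False,6),
   ([1,2,4,5],[1,2,3],[3,1,2],False,8),
   ([1,2,4,6],[1,2,3],[3,2,1],False,8),
   ([1,2,4,7],[3,1,2],[3,1,2],False,6),
   ([1,2,4,8],[1,2,3],[1,2,3],False,9)]"

lemma map_fst_reindex_witnesses: "map fst reindex_witnesses = echelon_lists 0 4"
  by code_simp

lemma reindex_witnesses_correct:
  "list_all (\<lambda>(c, p, q, t, k). p \<in> set perms_123 \<and> q \<in> set perms_123 \<and> k < 10 \<and>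
      relations (block (reindex (perm_of_list p) (perm_of_list q) t (square_of_block c)))
      = relations (block (squareB k)))
    reindex_witnesses"
  by code_simp

lemma distinct_relations_echelon_lists: "distinct (map relations (echelon_lists 0 4))"
  by code_simp

lemma echelon_block_squareB: "k < 10 \<Longrightarrow> echelon 0 (block (squareB k))"
proof -
  have "list_all (\<lambda>k. echelon 0 (block (squareB k))) [0..<10]"
    by code_simp
  then show "k < 10 \<Longrightarrow> ?thesis" by (simp add: list_all_iff)
qed

lemma squareB_eq_square_of_block:
  "k < 10 \<Longrightarrow> i < 4 \<Longrightarrow> j < 4 \<Longrightarrow> squareB k i j = square_of_block (block (squareB k)) i j"
proof -
  have "list_all (\<lambda>k. list_all (\<lambda>i. list_all (\<lambda>j.
      squareB k i j = square_of_block (block (squareB k)) i j) [0..<4]) [0..<4]) [0..<10]"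
    by code_simp
  then show "k < 10 \<Longrightarrow> i < 4 \<Longrightarrow> j < 4 \<Longrightarrow> ?thesis" by (simp add: list_all_iff)
qed

lemma echelon_reindex_relations:
  assumes "echelon 0 c" "length c = 4"
  shows "\<exists>\<sigma> \<tau> t k. \<sigma> permutes {1,2,3} \<and> \<tau> permutes {1,2,3} \<and> k < 10 \<and>
           relations (block (reindex \<sigma> \<tau> t (square_of_block c))) = relations (block (squareB k))"
proof -
  have "c \<in> set (map fst reindex_witnesses)"
    using assms by (simp add: map_fst_reindex_witnesses set_echelon_lists)
  then obtain p q t k where w: "(c, p, q, t, k) \<in> set reindex_witnesses"
    by (auto simp: image_iff)
  have "p \<in> set perms_123 \<and> q \<in> set perms_123 \<and> k < 10 \<and>
      relations (block (reindex (perm_of_list p) (perm_of_list q) t (square_of_block c)))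
      = relations (block (squareB k))"
    using bspec[OF reindex_witnesses_correct[unfolded list_all_iff] w] by simp
  then show ?thesis
    using perm_of_list_permutes by blast
qed

lemma echelon_eq_if_relations_eq:
  assumes "echelon 0 xs" "echelon 0 ys" "length xs = 4" "length ys = 4"
    and "relations xs = relations ys"
  shows "xs = ys"
proof -
  have "inj_on relations (set (echelon_lists 0 4))"
    using distinct_relations_echelon_lists by (simp add: distinct_map)
  then show ?thesis
    using assms by (auto simp: set_echelon_lists dest: inj_onD)
qed

lemma typeBprime_reindex_relations:
  assumes S: "typeBprime m S"
  shows "\<exists>\<sigma> \<tau> t k. \<sigma> permutes {1,2,3} \<and> \<tau> permutes {1,2,3} \<and> k < 10 \<and>
           relations (block (reindex \<sigma> \<tau> t S)) = relations (block (squareB k))"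
proof -
  have d: "set (block S) \<subseteq> {..<2^m}" using block_less_if_typeBprime[OF S] .
  obtain f where f: "inv_linear_Z2 m f" "echelon 0 (map f (block S))"
    using exists_inv_linear_Z2_echelon[OF d] by blast
  define c where "c = map f (block S)"
  have "length c = 4" by (simp add: c_def block_def)
  then obtain \<sigma> \<tau> t k where \<sigma>: "\<sigma> permutes {1,2,3}" and \<tau>: "\<tau> permutes {1,2,3}" and k: "k < 10"
    and rel: "relations (block (reindex \<sigma> \<tau> t (square_of_block c))) = relations (block (squareB k))"
    using echelon_reindex_relations f(2) unfolding c_def by blast
  have fS: "f (S i j) = square_of_block c i j" if "i < 4" "j < 4" for i j
    using typeBprime_eq_square_of_block[OF S that] inv_linear_Z2_square_of_block[OF f(1) d]
    by (simp add: c_def)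
  have "relations (block (reindex \<sigma> \<tau> t S)) = relations (map f (block (reindex \<sigma> \<tau> t S)))"
    using relations_map_inv_linear_Z2[OF f(1) block_less_if_typeBprime[OF typeBprime_reindex[OF S \<sigma> \<tau>]]]
    by simp
  also have "map f (block (reindex \<sigma> \<tau> t S)) = block (reindex \<sigma> \<tau> t (square_of_block c))"
    using fS permutes_123_less_4[OF \<sigma>] permutes_123_less_4[OF \<tau>] by (simp add: block_def reindex_def)
  also note rel
  finally show ?thesis
    using \<sigma> \<tau> k by blast
qed

theorem mainTheorem6:
  fixes m :: nat and S :: "nat \<Rightarrow> nat \<Rightarrow> nat"
  assumes "typeBprime m S"
  shows "\<exists>f \<sigma> \<tau> (t::bool) k. inv_affine_Z2 m f \<and>
           \<sigma> permutes {1,2,3} \<and> \<tau> permutes {1,2,3} \<and> k < 10 \<and>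
           (\<forall>i<4. \<forall>j<4.
              f (if t then S (\<sigma> j) (\<tau> i) else S (\<sigma> i) (\<tau> j))
                = squaresB ! k ! i ! j)"
proof -
  obtain \<sigma> \<tau> t k where \<sigma>: "\<sigma> permutes {1,2,3}" and \<tau>: "\<tau> permutes {1,2,3}" and k: "k < 10"
    and rel: "relations (block (reindex \<sigma> \<tau> t S)) = relations (block (squareB k))"
    using typeBprime_reindex_relations[OF assms] by blast
  define S' where "S' = reindex \<sigma> \<tau> t S"
  have S': "typeBprime m S'" using typeBprime_reindex[OF assms \<sigma> \<tau>] by (simp add: S'_def)
  have d: "set (block S') \<subseteq> {..<2^m}" using block_less_if_typeBprime[OF S'] .
  obtain g where g: "inv_linear_Z2 m g" "echelon 0 (map g (block S'))"
    using exists_inv_linear_Z2_echelon[OF d] by blast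
  have "relations (map g (block S')) = relations (block (squareB k))"
    using relations_map_inv_linear_Z2[OF g(1) d] rel by (simp add: S'_def)
  then have gS': "map g (block S') = block (squareB k)"
    using echelon_eq_if_relations_eq[OF g(2) echelon_block_squareB[OF k]] by (simp add: block_def)
  have "g (S' i j) = squaresB ! k ! i ! j" if "i < 4" "j < 4" for i j
    using typeBprime_eq_square_of_block[OF S' that] inv_linear_Z2_square_of_block[OF g(1) d]
      squareB_eq_square_of_block[OF k that] gS' by (simp add: squareB_def)
  then show ?thesis
    using inv_affine_Z2_if_inv_linear_Z2[OF g(1)] \<sigma> \<tau> k unfolding S'_def reindex_def by blast
qed

end
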